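(* Let $\nu$ be a probability measure on $\mathbb R$ with finite moments of all orders, and let $\{P_n\}_{n\ge0}$ be the monic orthogonal polynomials of $\nu$, satisfying $P_0=1$, $P_{-1}=0$ and $P_{n+1}(x)=(x-\alpha_{n+1})P_n(x)-\beta_nP_{n-1}(x)$ for $n\ge0$, with all $\beta_n\ge0$. Let $H(x,z)=\sum_{n\ge0}P_n(x)z^n$. (1) $H(x,z)=\frac{1}{u(z)(f(z)-x)}$ for some $u,f$ such that $u$ and $uf$ are formal power series with $u\in\mathcal P_{0,1}$ and $(uf)(0)=1$ if and only if there exist $\alpha,\alpha',\beta,\beta'$ with $\beta\ge0$, $\beta-\beta'\ge0$ such that $\alpha_n=\alpha-\delta_{n1}\alpha'$ and $\beta_n=\beta-\delta_{n1}\beta'$ for all $n\ge1$. (2) In this case $f=K_\nu\circ u$. (3) In this case, with $Q_n(x)=U_n(x-\alpha,\beta)$, one has $P_0=Q_0$, $P_1=Q_1+\alpha'Q_0$, and $P_n=Q_n+\alpha'Q_{n-1}+\beta'Q_{n-2}$ for $n>1$.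
   Context: $\mathcal P_{0,1}$ denotes formal power series $u(z)$ with $u(0)=0$, $u'(0)=1$. $G_\nu(z)=\sum_{n\ge0}m_n(\nu)z^{-(n+1)}$ is the Cauchy transform of $\nu$ ($m_n$ its moments) and $K_\nu$ its inverse under composition (a series $\frac1z+\sum_{n\ge1}c_nz^{n-1}$). Chebyshev polynomials of the second kind: $U_n(2\cos\theta)=\frac{\sin(n+1)\theta}{\sin\theta}$, $U_n(x,t)=t^{n/2}U_n(x/\sqrt t)$, and $U_n(x-\alpha,\beta)$ means $U_n(\cdot,\beta)$ evaluated at $x-\alpha$; these satisfy $Q_{n+1}=(x-\alpha)Q_n-\beta Q_{n-1}$. *)

theory Defs
  imports "HOL-Probability.Probability" "HOL-Computational_Algebra.Formal_Laurent_Series"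
    "HOL-Computational_Algebra.Polynomial"
begin

definition moment :: "real measure \<Rightarrow> nat \<Rightarrow> real" where
  "moment \<nu> n = (\<integral>x. x ^ n \<partial>\<nu>)"

text \<open>The Cauchy transform G(z) = sum m_n z^(-(n+1)), written in the variable w = 1/z:
  g(w) = G(1/w) = sum m_n w^(n+1), a formal power series with g(0)=0, g'(0)=m_0.\<close>
definition cauchy_fps :: "real measure \<Rightarrow> real fps" where
  "cauchy_fps \<nu> = Abs_fps (\<lambda>n. if n = 0 then 0 else moment \<nu> (n - 1))"

text \<open>K_nu, the inverse of G_nu under composition: if k is the compositional inverse of g,
  then K(z) = 1/k(z) satisfies G(K(z)) = g(k(z)) = z.\<close>
definition K_fls :: "real measure \<Rightarrow> real fls" where
  "K_fls \<nu> = inverse (fps_to_fls (fps_inv (cauchy_fps \<nu>)))"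

text \<open>Composition L o u of a formal Laurent series L = z^d * b(z) (b a power series)
  with a power series u having u(0)=0, u'(0)<>0:  (L o u) = b(u) * u^d.\<close>
definition fls_compose_fps :: "real fls \<Rightarrow> real fps \<Rightarrow> real fls" where
  "fls_compose_fps L u =
     fps_to_fls (fps_compose (fls_base_factor_to_fps L) u) * (fps_to_fls u) powi (fls_subdegree L)"

text \<open>Chebyshev polynomials of the second kind in two variables, U_n(x,t) = t^(n/2) U_n(x/sqrt t),
  as polynomials in x: U_0 = 1, U_1 = x, U_(n+1) = x U_n - t U_(n-1).\<close>
fun cheb_U :: "nat \<Rightarrow> real \<Rightarrow> real poly" where
  "cheb_U 0 t = 1"
| "cheb_U (Suc 0) t = [:0, 1:]"
| "cheb_U (Suc (Suc n)) t = [:0, 1:] * cheb_U (Suc n) t - smult t (cheb_U n t)"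

end

theory Submission
  imports Defs
begin

(*
  If H = 1 / (w - x u), then H (w - x u) = 1. Since P\<^sub>k is monic
  of degree k, the coefficients of x^(j+1) in the z^(j+2)- and z^(j+3)-coefficients of this
  identity express \<alpha>\<^sub>j\<^sub>+\<^sub>2 and \<beta>\<^sub>j\<^sub>+\<^sub>2 through u\<^sub>2, u\<^sub>3, w\<^sub>1, w\<^sub>2 alone, so the recurrence
  coefficients are constant from n = 2 on. Conversely, for such coefficients the recurrence
  says H (1 + (\<alpha> - x) z + \<beta> z^2) = 1 + \<alpha>' z + \<beta>' z^2, which has the required shape.

  For the composition formula put v = u / w, so that H = w\<^sup>-\<^sup>1 \<Sum>\<^sub>n x^n v^n. Integrating
  against \<nu>, orthogonality to P\<^sub>0 = 1 gives 1 = w\<^sup>-\<^sup>1 (M \<circ> v) for the moment series M; hence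
  the Cauchy series g = z M satisfies g \<circ> v = u, and K \<circ> u = 1 / (g\<^sup>-\<^sup>1 \<circ> u) = 1 / v = w / u.

  The Chebyshev expansion holds because both sides satisfy the constant-coefficient
  recurrence from n = 2 on and agree for n = 2, 3.
*)

lemma fps_inverse_one_minus_const_X:
  fixes c :: "'a::field"
  shows "inverse (1 - fps_const c * fps_X) = Abs_fps (\<lambda>n. c ^ n)"
proof (rule fps_inverse_unique, rule fps_ext)
  fix n
  show "((1 - fps_const c * fps_X) * Abs_fps (\<lambda>n. c ^ n)) $ n = 1 $ n"
    by (cases n) (simp_all add: algebra_simps mult.assoc)
qed

lemma sum_atMost_shift_vanishing:
  fixes f :: "nat \<Rightarrow> 'a::comm_monoid_add"
  assumes "\<And>k. k < j \<Longrightarrow> f k = 0"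
  shows "(\<Sum>k\<le>j + r. f k) = (\<Sum>i\<le>r. f (j + i))"
proof (induction r)
  case 0
  have "(\<Sum>k<j. f k) = 0"
    using assms by simp
  then show ?case
    by (simp flip: lessThan_Suc_atMost)
next
  case (Suc r)
  then show ?case by simp
qed

lemma fps_mult_quadratic_nth:
  fixes F :: "'a::comm_ring_1 fps" and c d :: 'a
  defines "Q \<equiv> 1 + fps_const c * fps_X + fps_const d * fps_X ^ 2"
  shows "(F * Q) $ 0 = F $ 0"
    and "(F * Q) $ 1 = F $ 1 + c * F $ 0"
    and "(F * Q) $ Suc (Suc n) = F $ Suc (Suc n) + c * F $ Suc n + d * F $ n"
  unfolding Q_def mult.commute[of F]
  by (simp_all add: distrib_right mult.assoc fps_X_mult_nth fps_X_power_mult_nth)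

lemma coeff_mult_linear_Suc:
  "coeff (p * [:c, d:]) (Suc j) = c * coeff p (Suc j) + d * coeff p j"
  by (simp add: mult.commute[of p] mult_pCons_left)

lemma pcompose_cheb_U_Suc_Suc:
  "pcompose (cheb_U (Suc (Suc n)) t) p = p * pcompose (cheb_U (Suc n) t) p - smult t (pcompose (cheb_U n t) p)"
  by (simp add: pcompose_diff pcompose_mult pcompose_smult pcompose_pCons)

lemma resolvent_convolution_eq_0:
  fixes P :: "nat \<Rightarrow> real poly" and u w :: "real fps"
  assumes "u $ 0 = 0" and "w $ 0 = 1"
    and resolvent: "\<And>x. Abs_fps (\<lambda>n. poly (P n) x) = inverse (w - fps_const x * u)"
    and "n \<ge> 1"
  shows "(\<Sum>k\<le>n. P k * [:w $ (n - k), - (u $ (n - k)):]) = 0"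
proof (rule poly_ext)
  fix x :: real
  define D where "D = w - fps_const x * u"
  have "Abs_fps (\<lambda>n. poly (P n) x) * D = 1"
    using assms by (simp add: D_def resolvent inverse_mult_eq_1)
  then have "(Abs_fps (\<lambda>n. poly (P n) x) * D) $ n = 0"
    using \<open>n \<ge> 1\<close> by simp
  moreover have "D $ k = w $ k - x * u $ k" for k
    by (simp add: D_def)
  ultimately have "(\<Sum>k\<le>n. poly (P k) x * (w $ (n - k) - x * u $ (n - k))) = 0"
    by (simp only: fps_mult_nth fps_nth_Abs_fps atLeast0AtMost)
  then show "poly (\<Sum>k\<le>n. P k * [:w $ (n - k), - (u $ (n - k)):]) x = poly 0 x"
    by (simp add: poly_sum algebra_simps)
qed

locale three_term_recurrence =
  fixes P :: "nat \<Rightarrow> real poly" and \<alpha> \<beta> :: "nat \<Rightarrow> real"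
  assumes P0: "P 0 = 1"
    and P1: "P 1 = [:- \<alpha> 1, 1:]"
    and P_rec: "\<And>n. n \<ge> 1 \<Longrightarrow> P (n + 1) = [:- \<alpha> (n + 1), 1:] * P n - smult (\<beta> n) (P (n - 1))"
begin

lemma P_Suc_Suc: "P (Suc (Suc n)) = [:- \<alpha> (Suc (Suc n)), 1:] * P (Suc n) - smult (\<beta> (Suc n)) (P n)"
  using P_rec[of "Suc n"] by simp

lemma coeff_P_Suc_Suc:
  "coeff (P (Suc (Suc n))) (Suc j) =
     coeff (P (Suc n)) j - \<alpha> (Suc (Suc n)) * coeff (P (Suc n)) (Suc j) - \<beta> (Suc n) * coeff (P n) (Suc j)"
  by (simp add: P_Suc_Suc mult_pCons_left)

lemma coeff_P_monic: "coeff (P n) n = 1 \<and> (\<forall>j>n. coeff (P n) j = 0)"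
proof (induction n rule: induct_nat_012)
  case 0
  show ?case by (simp add: P0 coeff_1)
next
  case 1
  show ?case by (auto simp: P1[unfolded One_nat_def] coeff_pCons split: nat.split)
next
  case (ge2 n)
  show ?case
  proof (intro conjI allI impI)
    show "coeff (P (Suc (Suc n))) (Suc (Suc n)) = 1"
      using ge2 by (simp add: coeff_P_Suc_Suc)
    fix j
    assume "Suc (Suc n) < j"
    then obtain i where "j = Suc i" and "Suc n < i"
      by (auto elim: Suc_lessE)
    then show "coeff (P (Suc (Suc n))) j = 0"
      using ge2 by (simp add: coeff_P_Suc_Suc)
  qed
qed

lemma coeff_P_self [simp]: "coeff (P n) n = 1"
  using coeff_P_monic by blast

lemma coeff_P_above: "n < j \<Longrightarrow> coeff (P n) j = 0"
  using coeff_P_monic by blast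

context
  fixes u w :: "real fps"
  assumes u0: "u $ 0 = 0" and u1: "u $ 1 = 1" and w0: "w $ 0 = 1"
    and resolvent: "\<And>x. Abs_fps (\<lambda>n. poly (P n) x) = inverse (w - fps_const x * u)"
begin

(* The coefficient of x^(j+1) in the z^(j+r)-coefficient of H (w - x u) = 1, where only
  P\<^sub>j, ..., P\<^sub>j\<^sub>+\<^sub>r contribute. *)
lemma resolvent_coeff_identity:
  assumes "j + r \<ge> 1"
  shows "(\<Sum>i\<le>r. w $ (r - i) * coeff (P (j + i)) (Suc j) - u $ (r - i) * coeff (P (j + i)) j) = 0"
proof -
  have "0 = coeff (\<Sum>k\<le>j + r. P k * [:w $ (j + r - k), - (u $ (j + r - k)):]) (Suc j)"
    using resolvent_convolution_eq_0[OF u0 w0 resolvent assms] by simp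
  also have "\<dots> = (\<Sum>k\<le>j + r. w $ (j + r - k) * coeff (P k) (Suc j) - u $ (j + r - k) * coeff (P k) j)"
    by (simp add: coeff_sum coeff_mult_linear_Suc)
  also have "\<dots> = (\<Sum>i\<le>r. w $ (r - i) * coeff (P (j + i)) (Suc j) - u $ (r - i) * coeff (P (j + i)) j)"
    by (subst sum_atMost_shift_vanishing) (simp_all add: coeff_P_above)
  finally show ?thesis ..
qed

lemma alpha_1_eq: "\<alpha> 1 = w $ 1"
proof -
  have "coeff (\<Sum>k\<le>1. P k * [:w $ (1 - k), - (u $ (1 - k)):]) 0 = 0"
    using resolvent_convolution_eq_0[OF u0 w0 resolvent, of 1] by simp
  then show ?thesis
    using u0 u1 w0 by (simp add: P0 P1[unfolded One_nat_def])
qed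

lemma alpha_Suc_Suc_eq: "\<alpha> (Suc (Suc j)) = w $ 1 - u $ 2"
  using resolvent_coeff_identity[of j 2] u0 u1 w0
  by (simp add: numeral_2_eq_2 coeff_P_Suc_Suc coeff_P_above)

lemma beta_Suc_Suc_eq: "\<beta> (Suc (Suc j)) = w $ 2 - u $ 3 - u $ 2 * (w $ 1 - u $ 2)"
  using resolvent_coeff_identity[of j 3] u0 u1 w0 alpha_Suc_Suc_eq[of j] alpha_Suc_Suc_eq[of "Suc j"]
  by (simp add: eval_nat_numeral coeff_P_Suc_Suc coeff_P_above algebra_simps)

lemma resolvent_imp_perturbed_coefficients:
  assumes beta_nonneg: "\<And>n. n \<ge> 1 \<Longrightarrow> \<beta> n \<ge> 0"
  shows "\<exists>a a' b b'. b \<ge> 0 \<and> b - b' \<ge> 0 \<and>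
    (\<forall>n\<ge>1. \<alpha> n = a - (if n = 1 then a' else 0) \<and> \<beta> n = b - (if n = 1 then b' else 0))"
proof -
  have "\<alpha> n = (w $ 1 - u $ 2) - (if n = 1 then - u $ 2 else 0) \<and>
        \<beta> n = \<beta> 2 - (if n = 1 then \<beta> 2 - \<beta> 1 else 0)" if "n \<ge> 1" for n
  proof (cases "n = 1")
    case True
    then show ?thesis
      using alpha_1_eq by simp
  next
    case False
    then obtain m where "n = Suc (Suc m)"
      using \<open>n \<ge> 1\<close> by (metis One_nat_def Suc_le_D le_SucE le_zero_eq not0_implies_Suc)
    then show ?thesis
      using beta_Suc_Suc_eq[of m] beta_Suc_Suc_eq[of 0] by (simp add: alpha_Suc_Suc_eq numeral_2_eq_2)
  qed
  moreover have "\<beta> 2 \<ge> 0" and "\<beta> 2 - (\<beta> 2 - \<beta> 1) \<ge> 0"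
    using beta_nonneg[of 2] beta_nonneg[of 1] by simp_all
  ultimately show ?thesis
    by blast
qed

end

end

locale perturbed_three_term_recurrence = three_term_recurrence +
  fixes a a' b b' :: real
  assumes perturbed: "\<forall>n\<ge>1. \<alpha> n = a - (if n = 1 then a' else 0) \<and> \<beta> n = b - (if n = 1 then b' else 0)"
begin

lemma alpha_1: "\<alpha> 1 = a - a'" and beta_1: "\<beta> 1 = b - b'"
  using perturbed by auto

lemma alpha_Suc_Suc: "\<alpha> (Suc (Suc n)) = a" and beta_Suc_Suc: "\<beta> (Suc (Suc n)) = b"
  using perturbed by auto

lemma P_1_eq: "P 1 = [:- a, 1:] + [:a':]"
  using P1 alpha_1 by simp

lemma P_2_eq: "P 2 = [:- a, 1:] * ([:- a, 1:] + [:a':]) - [:b - b':]"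
  using P_Suc_Suc[of 0] P_1_eq beta_1 by (simp add: numeral_2_eq_2 alpha_Suc_Suc P0)

lemma P_Suc_Suc_Suc: "P (Suc (Suc (Suc n))) = [:- a, 1:] * P (Suc (Suc n)) - smult b (P (Suc n))"
  using P_Suc_Suc[of "Suc n"] by (simp add: alpha_Suc_Suc beta_Suc_Suc)

lemma resolvent_closed_form:
  defines "D \<equiv> 1 + fps_const a' * fps_X + fps_const b' * fps_X ^ 2"
  shows "Abs_fps (\<lambda>n. poly (P n) x) =
    inverse ((1 + fps_const a * fps_X + fps_const b * fps_X ^ 2) * inverse D - fps_const x * (fps_X * inverse D))"
proof -
  define H where "H = Abs_fps (\<lambda>n. poly (P n) x)"
  define N where "N = 1 + fps_const (a - x) * fps_X + fps_const b * fps_X ^ 2"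
  have poly_P_1: "poly (P (Suc 0)) x = x - a + a'"
    using P_1_eq by simp
  have poly_P_2: "poly (P (Suc (Suc 0))) x = (x - a) * (x - a + a') - (b - b')"
    using P_2_eq unfolding numeral_2_eq_2 by (simp add: algebra_simps)
  have D_nth: "D $ 0 = 1" "D $ Suc 0 = a'" "D $ Suc (Suc m) = (if m = 0 then b' else 0)" for m
    using fps_mult_quadratic_nth[of 1 a' b'] by (simp_all add: D_def)
  have "(H * N) $ n = D $ n" for n
  proof (induction n rule: induct_nat_012)
    case 0
    show ?case
      unfolding N_def fps_mult_quadratic_nth by (simp add: H_def D_nth P0)
  next
    case 1
    show ?case
      unfolding N_def fps_mult_quadratic_nth by (simp add: H_def D_nth P0 poly_P_1)
  next
    case (ge2 m)
    have "(H * N) $ Suc (Suc m) = poly (P (Suc (Suc m))) x + (a - x) * poly (P (Suc m)) x + b * poly (P m) x"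
      unfolding N_def fps_mult_quadratic_nth by (simp add: H_def)
    then show ?case
      by (cases m) (simp_all add: D_nth P0 poly_P_1 poly_P_2 P_Suc_Suc_Suc algebra_simps)
  qed
  then have "H * N = D"
    by (simp add: fps_eq_iff)
  have "N $ 0 = 1"
    by (simp add: N_def)
  have N_eq: "N * inverse D =
      (1 + fps_const a * fps_X + fps_const b * fps_X ^ 2) * inverse D - fps_const x * (fps_X * inverse D)"
    unfolding N_def fps_const_sub[symmetric] by (simp add: algebra_simps del: fps_const_sub)
  have "H = H * (N * inverse N)"
    using \<open>N $ 0 = 1\<close> by (simp add: inverse_mult_eq_1')
  also have "\<dots> = D * inverse N"
    by (simp only: mult.assoc[symmetric] \<open>H * N = D\<close>)
  also have "\<dots> = inverse (N * inverse D)"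
    using D_nth(1) by (simp add: fps_inverse_mult mult.commute)
  finally show ?thesis
    by (simp add: H_def N_eq)
qed

lemma resolvent_form_exists:
  "\<exists>u w :: real fps. u $ 0 = 0 \<and> u $ 1 = 1 \<and> w $ 0 = 1 \<and>
     (\<forall>x. Abs_fps (\<lambda>n. poly (P n) x) = inverse (w - fps_const x * u))"
proof -
  define D :: "real fps" where "D = 1 + fps_const a' * fps_X + fps_const b' * fps_X ^ 2"
  have "D $ 0 = 1"
    by (simp add: D_def)
  then have "(fps_X * inverse D) $ 0 = 0" and "(fps_X * inverse D) $ 1 = 1"
    and "((1 + fps_const a * fps_X + fps_const b * fps_X ^ 2) * inverse D) $ 0 = 1"
    by (simp_all add: fps_X_mult_nth)
  with resolvent_closed_form show ?thesis
    unfolding D_def by blast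
qed

lemma chebyshev_expansion:
  "let Q = (\<lambda>n. pcompose (cheb_U n b) [:- a, 1:]) in
     P 0 = Q 0 \<and> P 1 = Q 1 + smult a' (Q 0) \<and>
     (\<forall>n>1. P n = Q n + smult a' (Q (n - 1)) + smult b' (Q (n - 2)))"
proof -
  define Q where "Q = (\<lambda>n. pcompose (cheb_U n b) [:- a, 1:])"
  have Q_0: "Q 0 = 1" and Q_1: "Q (Suc 0) = [:- a, 1:]"
    by (simp_all add: Q_def pcompose_1 pcompose_pCons)
  have Q_Suc_Suc: "Q (Suc (Suc n)) = [:- a, 1:] * Q (Suc n) - smult b (Q n)" for n
    unfolding Q_def by (rule pcompose_cheb_U_Suc_Suc)
  define R where "R n = Q (Suc (Suc n)) + smult a' (Q (Suc n)) + smult b' (Q n)" for n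
  have R_Suc_Suc: "R (Suc (Suc n)) = [:- a, 1:] * R (Suc n) - smult b (R n)" for n
    unfolding R_def by (intro poly_ext) (simp add: Q_Suc_Suc algebra_simps)
  have "P (Suc (Suc n)) = R n" for n
  proof (induction n rule: induct_nat_012)
    case 0
    show ?case
      using P_2_eq unfolding R_def numeral_2_eq_2
      by (intro poly_ext) (simp add: Q_Suc_Suc Q_0 Q_1 algebra_simps)
  next
    case 1
    show ?case
      unfolding P_Suc_Suc_Suc P_2_eq[unfolded numeral_2_eq_2] P_1_eq[unfolded One_nat_def] R_def
      by (intro poly_ext) (simp add: Q_Suc_Suc Q_0 Q_1 algebra_simps)
  next
    case (ge2 n)
    then show ?case
      by (simp add: P_Suc_Suc_Suc R_Suc_Suc)
  qed
  then have "\<forall>n>1. P n = Q n + smult a' (Q (n - 1)) + smult b' (Q (n - 2))"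
    by (auto simp: R_def dest!: less_imp_Suc_add)
  then show ?thesis
    unfolding Let_def Q_def[symmetric] using P0 P_1_eq Q_0 Q_1 by simp
qed

end

definition fps_lebesgue_integral :: "'a measure \<Rightarrow> ('a \<Rightarrow> real fps) \<Rightarrow> real fps" where
  "fps_lebesgue_integral M F = Abs_fps (\<lambda>n. \<integral>x. F x $ n \<partial>M)"

lemma fps_lebesgue_integral_mult_left:
  fixes F :: "'a \<Rightarrow> real fps"
  assumes "\<And>n. integrable M (\<lambda>x. F x $ n)"
  shows "fps_lebesgue_integral M (\<lambda>x. A * F x) = A * fps_lebesgue_integral M F"
  using assms by (intro fps_ext) (simp add: fps_lebesgue_integral_def fps_mult_nth)

lemma integrable_geometric_compose_nth:
  fixes M :: "real measure" and v :: "real fps"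
  assumes "\<And>n. integrable M (\<lambda>x. x ^ n)"
  shows "integrable M (\<lambda>x. (Abs_fps (\<lambda>n. x ^ n) oo v) $ k)"
  using assms by (simp add: fps_compose_nth)

lemma fps_lebesgue_integral_geometric_compose:
  fixes M :: "real measure" and v :: "real fps"
  assumes "\<And>n. integrable M (\<lambda>x. x ^ n)"
  shows "fps_lebesgue_integral M (\<lambda>x. Abs_fps (\<lambda>n. x ^ n) oo v) = Abs_fps (moment M) oo v"
  using assms by (intro fps_ext) (simp add: fps_lebesgue_integral_def fps_compose_nth moment_def)

lemma fps_lebesgue_integral_orthogonal:
  fixes P :: "nat \<Rightarrow> real poly"
  assumes "prob_space M" and "P 0 = 1"
    and "\<And>n. n \<noteq> 0 \<Longrightarrow> (\<integral>x. poly (P n) x * poly (P 0) x \<partial>M) = 0"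
  shows "fps_lebesgue_integral M (\<lambda>x. Abs_fps (\<lambda>n. poly (P n) x)) = 1"
proof -
  have "poly (P 0) = (\<lambda>_. 1)"
    using \<open>P 0 = 1\<close> by auto
  then show ?thesis
    using assms by (intro fps_ext) (simp add: fps_lebesgue_integral_def prob_space.prob_space)
qed

lemma fls_compose_fps_eq: "Defs.fls_compose_fps = Formal_Laurent_Series.fls_compose_fps"
  by (intro ext) (simp add: Defs.fls_compose_fps_def Formal_Laurent_Series.fls_compose_fps_def)

context
  fixes M :: "real measure" and P :: "nat \<Rightarrow> real poly" and u w :: "real fps"
  assumes prob: "prob_space M"
    and moments: "\<And>n. integrable M (\<lambda>x. x ^ n)"
    and orth: "\<And>n. n \<noteq> 0 \<Longrightarrow> (\<integral>x. poly (P n) x * poly (P 0) x \<partial>M) = 0"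
    and P0: "P 0 = 1" and u0: "u $ 0 = 0" and w0: "w $ 0 = 1"
    and resolvent: "\<And>x. Abs_fps (\<lambda>n. poly (P n) x) = inverse (w - fps_const x * u)"
begin

lemma resolvent_eq_geometric_compose:
  "Abs_fps (\<lambda>n. poly (P n) x) = inverse w * (Abs_fps (\<lambda>n. x ^ n) oo (u * inverse w))"
proof -
  define v where "v = u * inverse w"
  have v0: "v $ 0 = 0"
    using u0 by (simp add: v_def)
  have "w - fps_const x * u = w * (1 - fps_const x * v)"
    using w0 by (simp add: v_def algebra_simps inverse_mult_eq_1')
  also have "1 - fps_const x * v = (1 - fps_const x * fps_X) oo v"
    using v0 by (simp add: fps_compose_sub_distrib flip: fps_const_mult_apply_left)
  finally have "inverse (w - fps_const x * u) = inverse w * inverse ((1 - fps_const x * fps_X) oo v)"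
    using w0 by (simp add: fps_inverse_mult)
  also have "inverse ((1 - fps_const x * fps_X) oo v) = Abs_fps (\<lambda>n. x ^ n) oo v"
    using v0 by (simp add: fps_inverse_one_minus_const_X flip: fps_inverse_compose)
  finally show ?thesis
    by (simp add: resolvent v_def)
qed

lemma moment_fps_compose_eq:
  "Abs_fps (moment M) oo (u * inverse w) = w"
proof -
  have "1 = fps_lebesgue_integral M (\<lambda>x. Abs_fps (\<lambda>n. poly (P n) x))"
    using fps_lebesgue_integral_orthogonal[of M P, OF prob P0 orth] by simp
  also have "\<dots> = inverse w * (Abs_fps (moment M) oo (u * inverse w))"
    by (simp add: resolvent_eq_geometric_compose fps_lebesgue_integral_mult_left
        integrable_geometric_compose_nth fps_lebesgue_integral_geometric_compose moments)
  finally have integral_eq_1: "inverse w * (Abs_fps (moment M) oo (u * inverse w)) = 1" ..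
  have "Abs_fps (moment M) oo (u * inverse w) = w * inverse w * (Abs_fps (moment M) oo (u * inverse w))"
    using w0 by (simp add: inverse_mult_eq_1')
  also have "\<dots> = w"
    by (simp only: mult.assoc integral_eq_1 mult_1_right)
  finally show ?thesis .
qed

lemma cauchy_fps_compose_eq: "cauchy_fps M oo (u * inverse w) = u"
proof -
  have "cauchy_fps M = fps_X * Abs_fps (moment M)"
    by (rule fps_ext) (simp add: cauchy_fps_def fps_X_mult_nth)
  then have "cauchy_fps M oo (u * inverse w) = u * inverse w * w"
    using u0 by (simp add: fps_compose_mult_distrib moment_fps_compose_eq)
  then show ?thesis
    using w0 by (simp add: inverse_mult_eq_1)
qed

lemma fps_inv_cauchy_fps_compose_eq: "fps_inv (cauchy_fps M) oo u = u * inverse w"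
proof -
  have "cauchy_fps M $ 1 = 1"
    using prob by (simp add: cauchy_fps_def moment_def prob_space.prob_space)
  then have left_inverse: "fps_inv (cauchy_fps M) oo cauchy_fps M = fps_X"
    by (intro fps_inv) (simp_all add: cauchy_fps_def)
  have "fps_inv (cauchy_fps M) oo u = fps_inv (cauchy_fps M) oo (cauchy_fps M oo (u * inverse w))"
    by (simp add: cauchy_fps_compose_eq)
  also have "\<dots> = (fps_inv (cauchy_fps M) oo cauchy_fps M) oo (u * inverse w)"
    using u0 by (simp add: fps_compose_assoc cauchy_fps_def)
  also have "\<dots> = u * inverse w"
    using u0 by (simp add: left_inverse)
  finally show ?thesis .
qed

lemma K_fls_compose_resolvent:
  assumes "u $ 1 = 1"
  shows "fps_to_fls w / fps_to_fls u = fls_compose_fps (K_fls M) u"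
proof -
  have "u \<noteq> 0"
    using assms by auto
  then have "fls_compose_fps (K_fls M) u = inverse (fps_to_fls (u * inverse w))"
    using u0 by (simp add: K_fls_def fls_compose_fps_eq fls_compose_fps_inverse fps_inv_cauchy_fps_compose_eq)
  also have "\<dots> = fps_to_fls w / fps_to_fls u"
  proof -
    have "fps_to_fls (inverse w) = inverse (fps_to_fls w)"
      using w0 by (simp add: fls_inverse_fps_to_fls subdegree_eq_0_iff)
    then show ?thesis
      by (simp only: fls_times_fps_to_fls inverse_mult_distrib inverse_inverse_eq
          divide_inverse mult.commute)
  qed
  finally show ?thesis ..
qed

end

theorem lemma3p1:
  fixes \<nu> :: "real measure"
    and P :: "nat \<Rightarrow> real poly"
    and \<alpha> \<beta> :: "nat \<Rightarrow> real"
  assumes prob: "prob_space \<nu>"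
    and borel: "sets \<nu> = sets borel"
    and moments: "\<And>n. integrable \<nu> (\<lambda>x. x ^ n)"
    and orth: "\<And>n m. n \<noteq> m \<Longrightarrow> (\<integral>x. poly (P n) x * poly (P m) x \<partial>\<nu>) = 0"
    and P0: "P 0 = 1"
    and P1: "P 1 = [:- \<alpha> 1, 1:]"
    and Prec: "\<And>n. n \<ge> 1 \<Longrightarrow> P (n + 1) = [:- \<alpha> (n + 1), 1:] * P n - smult (\<beta> n) (P (n - 1))"
    and beta_nonneg: "\<And>n. n \<ge> 1 \<Longrightarrow> \<beta> n \<ge> 0"
  shows
    "((\<exists>u w :: real fps. u $ 0 = 0 \<and> u $ 1 = 1 \<and> w $ 0 = 1 \<and>
         (\<forall>x::real. Abs_fps (\<lambda>n. poly (P n) x) = inverse (w - fps_const x * u)))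
      \<longleftrightarrow>
      (\<exists>a a' b b' :: real. b \<ge> 0 \<and> b - b' \<ge> 0 \<and>
         (\<forall>n\<ge>1. \<alpha> n = a - (if n = 1 then a' else 0) \<and> \<beta> n = b - (if n = 1 then b' else 0))))
    \<and>
    (\<forall>u w :: real fps. u $ 0 = 0 \<and> u $ 1 = 1 \<and> w $ 0 = 1 \<and>
         (\<forall>x::real. Abs_fps (\<lambda>n. poly (P n) x) = inverse (w - fps_const x * u))
       \<longrightarrow> fps_to_fls w / fps_to_fls u = fls_compose_fps (K_fls \<nu>) u)
    \<and>
    (\<forall>a a' b b' :: real. b \<ge> 0 \<and> b - b' \<ge> 0 \<and>
         (\<forall>n\<ge>1. \<alpha> n = a - (if n = 1 then a' else 0) \<and> \<beta> n = b - (if n = 1 then b' else 0))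
       \<longrightarrow> (let Q = (\<lambda>n. pcompose (cheb_U n b) [:- a, 1:]) in
            P 0 = Q 0 \<and> P 1 = Q 1 + smult a' (Q 0) \<and>
            (\<forall>n>1. P n = Q n + smult a' (Q (n - 1)) + smult b' (Q (n - 2)))))"
proof -
  interpret three_term_recurrence P \<alpha> \<beta>
    using P0 P1 Prec by unfold_locales
  have perturbed: "perturbed_three_term_recurrence P \<alpha> \<beta> a a' b b'"
    if "\<forall>n\<ge>1. \<alpha> n = a - (if n = 1 then a' else 0) \<and> \<beta> n = b - (if n = 1 then b' else 0)"
    for a a' b b'
    using that by unfold_locales
  show ?thesis
    using resolvent_imp_perturbed_coefficients[OF _ _ _ _ beta_nonneg]
      perturbed_three_term_recurrence.resolvent_form_exists[OF perturbed]
      K_fls_compose_resolvent[of \<nu> P, OF prob moments orth P0]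
      perturbed_three_term_recurrence.chebyshev_expansion[OF perturbed]
    by blast
qed

end
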